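(* Let $A$ be a nonempty finite set of positive integers. The number of nonempty subsets of $A$ whose elements are pairwise co-prime equals \[ \# \left\{B\subseteq A:\ B\neq\emptyset\ \text{and}\ 2|B| -1 = \left( 1 + 4 \sum_{d=1}^{\sup B} \mu(d)\, v(B,d)\, (v(B,d)-1) \right)^{1/2} \right\}. \]
   Context: For a nonempty finite set $B$ of positive integers, $\sup B$ is its largest element and, for a positive integer $d$, $v(B,d)$ is the number of multiples of $d$ in $B$. $\mu$ is the Möbius function. A set is said to have pairwise co-prime elements if every $2$-element subset has gcd $1$ (vacuously true for singletons). *)

theory Defs
  imports Complex_Main "HOL-Computational_Algebra.Squarefree"
begin

definition moebius_mu :: "nat \<Rightarrow> int" where
  "moebius_mu d = (if squarefree d then (-1) ^ card (prime_factors d) else 0)"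

definition v :: "nat set \<Rightarrow> nat \<Rightarrow> nat" where
  "v B d = card {b \<in> B. d dvd b}"

definition pairwise_coprime :: "nat set \<Rightarrow> bool" where
  "pairwise_coprime B \<longleftrightarrow> (\<forall>a\<in>B. \<forall>b\<in>B. a \<noteq> b \<longrightarrow> coprime a b)"

end

theory Submission
  imports Defs
begin

(*
  Since v(B,d) * (v(B,d) - 1) counts the ordered pairs of distinct multiples of d in B, the
  identity  sum_{d | g} mu(d) = [g = 1],  applied to g = gcd(a, b), shows that
  sum_{d <= max B} mu(d) v(B,d) (v(B,d) - 1)  is the number c of ordered pairs of distinct
  coprime elements of B. As c <= |B| (|B| - 1) with equality exactly when B is pairwise coprime,
  and 1 + 4 |B| (|B| - 1) = (2|B| - 1)^2, the condition defining the second family of subsets is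
  just pairwise coprimality.
*)

lemma sum_Pow_minus_one_power_card:
  assumes "finite P"
  shows "(\<Sum>S\<in>Pow P. (-1::int) ^ card S) = of_bool (P = {})"
proof -
  have "(\<Sum>S\<in>Pow P. (-1::int) ^ card S) = 0 ^ card P"
    using prod_diff_conv_sum[OF assms, of "\<lambda>_. 1::int" "\<lambda>_. 1"] by simp
  also have "\<dots> = of_bool (P = {})"
    using assms by (cases "P = {}") (simp_all add: card_gt_0_iff)
  finally show ?thesis .
qed

lemma prime_factors_prod_primes:
  assumes "finite S" "\<forall>p\<in>S. prime (p::nat)"
  shows "prime_factors (\<Prod>S) = S"
proof -
  have "prime_factors (\<Prod>S) = \<Union>((prime_factors \<circ> id) ` S)"
    using prime_factors_prod[of S id] assms by (auto dest: prime_gt_0_nat)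
  then show ?thesis using assms by (auto simp: prime_prime_factors)
qed

lemma squarefree_prod_primes:
  assumes "\<forall>p\<in>S. prime (p::nat)"
  shows "squarefree (\<Prod>S)"
  using squarefree_prod_coprime[of S id] assms by (simp add: primes_coprime squarefree_prime)

lemma prod_prime_factors_squarefree:
  assumes "squarefree (d::nat)"
  shows "\<Prod>(prime_factors d) = d"
proof -
  have "d \<noteq> 0" using assms by (cases "d = 0") simp_all
  then have "\<Prod>(prime_factors d) = (\<Prod>p\<in>prime_factors d. p ^ multiplicity p d)"
    using assms squarefree_factorial_semiring'[OF \<open>d \<noteq> 0\<close>] by (intro prod.cong) auto
  also have "\<dots> = d" using \<open>d \<noteq> 0\<close> by (simp add: prod_prime_factors)
  finally show ?thesis .
qed

lemma prod_dvd_if_subset_prime_factors: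
  assumes "S \<subseteq> prime_factors (n::nat)"
  shows "\<Prod>S dvd n"
proof (cases "n = 0")
  case False
  have "\<Prod>S dvd \<Prod>(prime_factors n)"
    using assms by (intro prod_dvd_prod_subset) auto
  also have "\<dots> dvd (\<Prod>p\<in>prime_factors n. p ^ multiplicity p n)"
    using False by (intro prod_dvd_prod) (auto simp: prime_factors_multiplicity)
  also have "\<dots> = n" using False by (simp add: prod_prime_factors)
  finally show ?thesis .
qed simp

lemma bij_betw_Prod_squarefree_divisors:
  assumes "(n::nat) > 0"
  shows "bij_betw Prod (Pow (prime_factors n)) {d. d dvd n \<and> squarefree d}"
proof (rule bij_betw_byWitness[where f' = prime_factors])
  have primes: "\<forall>p\<in>S. prime p" if "S \<subseteq> prime_factors n" for S
    using that by auto
  have fin: "finite S" if "S \<subseteq> prime_factors n" for S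
    using that finite_subset by blast
  show "\<forall>S\<in>Pow (prime_factors n). prime_factors (\<Prod>S) = S"
    by (simp add: prime_factors_prod_primes primes fin)
  show "\<forall>d\<in>{d. d dvd n \<and> squarefree d}. \<Prod>(prime_factors d) = d"
    by (simp add: prod_prime_factors_squarefree)
  show "Prod ` Pow (prime_factors n) \<subseteq> {d. d dvd n \<and> squarefree d}"
    by (auto simp: prod_dvd_if_subset_prime_factors squarefree_prod_primes primes)
  show "prime_factors ` {d. d dvd n \<and> squarefree d} \<subseteq> Pow (prime_factors n)"
    using assms by (auto simp: prime_factors_dvd intro: dvd_trans)
qed

lemma sum_moebius_mu_divisors:
  assumes "(n::nat) > 0"
  shows "(\<Sum>d | d dvd n. moebius_mu d) = of_bool (n = 1)"
proof -
  let ?P = "prime_factors n"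
  have "(\<Sum>d | d dvd n. moebius_mu d) = (\<Sum>d | d dvd n \<and> squarefree d. moebius_mu d)"
    using assms by (intro sum.mono_neutral_right) (auto simp: moebius_mu_def)
  also have "\<dots> = (\<Sum>S\<in>Pow ?P. moebius_mu (\<Prod>S))"
    by (rule sum.reindex_bij_betw[OF bij_betw_Prod_squarefree_divisors[OF assms], symmetric])
  also have "\<dots> = (\<Sum>S\<in>Pow ?P. (-1) ^ card S)"
  proof (intro sum.cong refl)
    fix S assume "S \<in> Pow ?P"
    then have "finite S" "\<forall>p\<in>S. prime p" using finite_subset by auto
    then show "moebius_mu (\<Prod>S) = (-1) ^ card S"
      by (simp add: moebius_mu_def squarefree_prod_primes prime_factors_prod_primes)
  qed
  also have "\<dots> = of_bool (n = 1)"
    using assms by (simp add: sum_Pow_minus_one_power_card prime_factorization_empty_iff)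
  finally show ?thesis .
qed

lemma sum_moebius_mu_common_divisors:
  assumes "0 < a" "a \<le> N"
  shows "(\<Sum>d = 1..N. moebius_mu d * of_bool (d dvd a \<and> d dvd b)) = of_bool (coprime a b)"
proof -
  have "d \<in> {1..N}" if "d dvd a" for d
    using dvd_imp_le[OF that] dvd_pos_nat[OF _ that] assms by fastforce
  then have "{1..N} \<inter> {d. d dvd a \<and> d dvd b} = {d. d dvd gcd a b}"
    by auto
  then have "(\<Sum>d = 1..N. moebius_mu d * of_bool (d dvd a \<and> d dvd b))
           = (\<Sum>d \<in> {d. d dvd gcd a b}. moebius_mu d)"
    by (simp only: sum_mult_of_bool_eq[OF finite_atLeastAtMost])
  also have "\<dots> = of_bool (gcd a b = 1)"
    using assms by (intro sum_moebius_mu_divisors) simp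
  also have "\<dots> = of_bool (coprime a b)"
    by (simp only: coprime_iff_gcd_eq_1)
  finally show ?thesis .
qed

lemma card_Times_minus_Id:
  assumes "finite B"
  shows "card (B \<times> B - Id) = card B * (card B - 1)"
proof -
  have diag: "Id_on B = (\<lambda>x. (x, x)) ` B" by auto
  have "B \<times> B - Id = B \<times> B - Id_on B" by auto
  also have "card \<dots> = card (B \<times> B) - card (Id_on B)"
    using assms diag by (intro card_Diff_subset) auto
  also have "card (Id_on B) = card B"
    unfolding diag by (simp add: card_image inj_on_def)
  finally show ?thesis
    by (simp add: card_cartesian_product diff_mult_distrib2)
qed

lemma v_mult_pred_eq_card_pairs:
  assumes "finite B"
  shows "v B d * (v B d - 1) = card {(a, b) \<in> B \<times> B - Id. d dvd a \<and> d dvd b}"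
proof -
  let ?C = "{b \<in> B. d dvd b}"
  have "{(a, b) \<in> B \<times> B - Id. d dvd a \<and> d dvd b} = ?C \<times> ?C - Id" by auto
  then show ?thesis
    using assms card_Times_minus_Id[of ?C] by (simp add: v_def)
qed

lemma sum_moebius_v_eq_card_coprime_pairs:
  assumes "finite B" "\<forall>b\<in>B. 0 < b \<and> b \<le> N"
  shows "(\<Sum>d = 1..N. moebius_mu d * int (v B d) * (int (v B d) - 1))
       = int (card {(a, b) \<in> B \<times> B - Id. coprime a b})"
proof -
  let ?D = "B \<times> B - Id"
  have fin: "finite ?D" using assms by simp
  have summand: "moebius_mu d * int (v B d) * (int (v B d) - 1)
        = (\<Sum>p\<in>?D. moebius_mu d * of_bool (d dvd fst p \<and> d dvd snd p))" for d
  proof -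
    have "int (v B d) * (int (v B d) - 1) = int (v B d * (v B d - 1))"
      by (cases "v B d") (auto simp: algebra_simps)
    also have "\<dots> = int (card (?D \<inter> {p. d dvd fst p \<and> d dvd snd p}))"
      unfolding v_mult_pred_eq_card_pairs[OF assms(1)] by (rule arg_cong[where f = "\<lambda>S. int (card S)"]) auto
    also have "\<dots> = (\<Sum>p\<in>?D. of_bool (d dvd fst p \<and> d dvd snd p))"
      using fin by simp
    finally show ?thesis
      by (simp only: mult.assoc sum_distrib_left)
  qed
  have "(\<Sum>d = 1..N. moebius_mu d * int (v B d) * (int (v B d) - 1))
      = (\<Sum>d = 1..N. \<Sum>p\<in>?D. moebius_mu d * of_bool (d dvd fst p \<and> d dvd snd p))"
    by (simp only: summand)
  also have "\<dots> = (\<Sum>p\<in>?D. \<Sum>d = 1..N. moebius_mu d * of_bool (d dvd fst p \<and> d dvd snd p))"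
    by (rule sum.swap)
  also have "\<dots> = (\<Sum>p\<in>?D. of_bool (coprime (fst p) (snd p)))"
    using assms by (intro sum.cong refl sum_moebius_mu_common_divisors) auto
  also have "\<dots> = int (card (?D \<inter> {p. coprime (fst p) (snd p)}))"
    using fin by simp
  also have "?D \<inter> {p. coprime (fst p) (snd p)} = {(a, b) \<in> ?D. coprime a b}"
    by auto
  finally show ?thesis .
qed

lemma pairwise_coprime_iff_card_coprime_pairs:
  assumes "finite B"
  shows "pairwise_coprime B \<longleftrightarrow> card {(a, b) \<in> B \<times> B - Id. coprime a b} = card B * (card B - 1)"
    (is "_ \<longleftrightarrow> card ?S = _")
proof
  assume "pairwise_coprime B"
  then have "?S = B \<times> B - Id" by (auto simp: pairwise_coprime_def)
  then show "card ?S = card B * (card B - 1)" using card_Times_minus_Id[OF assms] by simp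
next
  assume "card ?S = card B * (card B - 1)"
  then have all_pairs: "?S = B \<times> B - Id"
    using assms card_Times_minus_Id[OF assms] by (intro card_subset_eq) auto
  show "pairwise_coprime B"
    unfolding pairwise_coprime_def
  proof (intro ballI impI)
    fix a b assume "a \<in> B" "b \<in> B" "a \<noteq> b"
    then have "(a, b) \<in> ?S" unfolding all_pairs by simp
    then show "coprime a b" by simp
  qed
qed

lemma double_minus_one_eq_sqrt_iff:
  assumes "1 \<le> n"
  shows "2 * real n - 1 = sqrt (1 + 4 * real c) \<longleftrightarrow> c = n * (n - 1)"
proof -
  have "2 * real n - 1 = sqrt (1 + 4 * real c) \<longleftrightarrow> (2 * real n - 1)\<^sup>2 = 1 + 4 * real c"
    using assms by (auto simp: real_sqrt_unique)
  also have "\<dots> \<longleftrightarrow> real c = real n * (real n - 1)"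
    by (simp add: power2_eq_square algebra_simps) linarith
  also have "real n * (real n - 1) = real (n * (n - 1))"
    using assms by (simp add: of_nat_diff)
  also have "real c = real (n * (n - 1)) \<longleftrightarrow> c = n * (n - 1)"
    by (rule of_nat_eq_iff)
  finally show ?thesis .
qed

theorem corollary5p6:
  fixes A :: "nat set"
  assumes "finite A" and "A \<noteq> {}" and "\<forall>a\<in>A. a > 0"
  shows "card {B. B \<subseteq> A \<and> B \<noteq> {} \<and> pairwise_coprime B} =
         card {B. B \<subseteq> A \<and> B \<noteq> {} \<and>
           2 * real (card B) - 1 =
             sqrt (1 + 4 * real_of_int (\<Sum>d = 1..Max B. moebius_mu d * int (v B d) * (int (v B d) - 1)))}"
proof -
  have "pairwise_coprime B \<longleftrightarrow> 2 * real (card B) - 1 =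
          sqrt (1 + 4 * real_of_int (\<Sum>d = 1..Max B. moebius_mu d * int (v B d) * (int (v B d) - 1)))"
    if "B \<subseteq> A" "B \<noteq> {}" for B
  proof -
    have fin: "finite B" using that assms finite_subset by blast
    then have "\<forall>b\<in>B. 0 < b \<and> b \<le> Max B" using that assms by auto
    then have "real_of_int (\<Sum>d = 1..Max B. moebius_mu d * int (v B d) * (int (v B d) - 1))
             = real (card {(a, b) \<in> B \<times> B - Id. coprime a b})"
      by (simp only: sum_moebius_v_eq_card_coprime_pairs[OF fin] of_int_of_nat_eq)
    moreover have "1 \<le> card B" using fin \<open>B \<noteq> {}\<close> by (simp add: Suc_le_eq card_gt_0_iff)
    ultimately show ?thesis
      by (simp only: pairwise_coprime_iff_card_coprime_pairs[OF fin] double_minus_one_eq_sqrt_iff)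
  qed
  then show ?thesis by (simp cong: conj_cong)
qed

end
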